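(* Let $\Lambda\in\mathcal H_I$ and $w$ a capacity. Then for all $X\in\mathcal X$, $$\Lambda\mathrm{VaR}^{w}(X)=\inf_{x\in\mathbb R}\{\mathrm{VaR}^w_{\Lambda(x)}(X)\vee x\}=\sup_{x\in\mathbb R}\{\mathrm{VaR}^w_{\Lambda(x)}(X)\wedge x\}$$ and $$\Lambda\mathrm{VaR}^{+,w}(X)=\inf_{x\in\mathbb R}\{\mathrm{VaR}^{+,w}_{\Lambda(x)}(X)\vee x\}=\sup_{x\in\mathbb R}\{\mathrm{VaR}^{+,w}_{\Lambda(x)}(X)\wedge x\},$$ where values in $[-\infty,\infty]$ are allowed.
   Context: Let $(\Omega,\mathcal F)$ be a measurable space and $\mathcal X$ a set of real-valued random variables on it containing all bounded ones. A capacity is a map $w:\mathcal F\to[0,1]$ with $w(\emptyset)=0$, $w(\Omega)=1$, and $A\subseteq B\Rightarrow w(A)\le w(B)$. For $\Lambda:\mathbb R\to[0,1]$: $\Lambda\mathrm{VaR}^w(X)=\inf\{x\in\mathbb R: w(X>x)\le\Lambda(x)\}$, $\Lambda\mathrm{VaR}^{+,w}(X)=\sup\{x\in\mathbb R: w(X>x)\ge\Lambda(x)\}$ ($\inf\emptyset=\infty$, $\sup\emptyset=-\infty$). For $p\in[0,1]$, the Choquet quantiles are $\mathrm{VaR}^w_p=\Lambda\mathrm{VaR}^w$ and $\mathrm{VaR}^{+,w}_p=\Lambda\mathrm{VaR}^{+,w}$ with the constant function $\Lambda\equiv p$. $\mathcal H_I$ is the set of increasing functions $\Lambda:\mathbb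 R\to(0,1)$. $a\vee b=\max(a,b)$, $a\wedge b=\min(a,b)$. *)

theory Defs
  imports "HOL-Analysis.Analysis"
begin

definition capacity :: "'a measure \<Rightarrow> ('a set \<Rightarrow> real) \<Rightarrow> bool" where
  "capacity M w \<longleftrightarrow>
     (\<forall>A\<in>sets M. 0 \<le> w A \<and> w A \<le> 1) \<and> w {} = 0 \<and> w (space M) = 1 \<and>
     (\<forall>A\<in>sets M. \<forall>B\<in>sets M. A \<subseteq> B \<longrightarrow> w A \<le> w B)"

text \<open>Lambda-VaR with respect to a capacity; values in the extended reals
  (Inf of the empty set is \<infinity>, Sup of the empty set is -\<infinity>).\<close>
definition LVaR :: "'a measure \<Rightarrow> ('a set \<Rightarrow> real) \<Rightarrow> (real \<Rightarrow> real) \<Rightarrow> ('a \<Rightarrow> real) \<Rightarrow> ereal" where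
  "LVaR M w \<Lambda> X = Inf {ereal x | x. w {\<omega> \<in> space M. X \<omega> > x} \<le> \<Lambda> x}"

definition LVaR_plus :: "'a measure \<Rightarrow> ('a set \<Rightarrow> real) \<Rightarrow> (real \<Rightarrow> real) \<Rightarrow> ('a \<Rightarrow> real) \<Rightarrow> ereal" where
  "LVaR_plus M w \<Lambda> X = Sup {ereal x | x. w {\<omega> \<in> space M. X \<omega> > x} \<ge> \<Lambda> x}"

definition VaR :: "'a measure \<Rightarrow> ('a set \<Rightarrow> real) \<Rightarrow> real \<Rightarrow> ('a \<Rightarrow> real) \<Rightarrow> ereal" where
  "VaR M w p X = LVaR M w (\<lambda>_. p) X"

definition VaR_plus :: "'a measure \<Rightarrow> ('a set \<Rightarrow> real) \<Rightarrow> real \<Rightarrow> ('a \<Rightarrow> real) \<Rightarrow> ereal" where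
  "VaR_plus M w p X = LVaR_plus M w (\<lambda>_. p) X"

definition H_I :: "(real \<Rightarrow> real) set" where
  "H_I = {\<Lambda>. mono \<Lambda> \<and> (\<forall>x. 0 < \<Lambda> x \<and> \<Lambda> x < 1)}"

end

theory Submission
  imports Defs
begin

text \<open>Let \<open>g x = w {X > x}\<close>, which is decreasing in \<open>x\<close>; of \<open>\<Lambda>\<close> only monotonicity is used,
  not that it takes values in \<open>(0,1)\<close>. The relation \<open>P y x \<longleftrightarrow> g y \<le> \<Lambda> x\<close> is then upward closed
  in both arguments, \<open>\<Lambda>VaR\<close> is the infimum \<open>S\<close> of its diagonal \<open>{x. P x x}\<close>, and the
  Choquet quantile at level \<open>\<Lambda> x\<close> is the infimum of its section \<open>{y. P y x}\<close>. For any such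
  relation the section infimum at \<open>x\<close> is \<open>\<ge> S\<close> when \<open>x < S\<close>, is \<open>\<le> S\<close> when \<open>x > S\<close>, and
  is \<open>\<le> x\<close> when \<open>P x x\<close>; both formulas for \<open>S\<close> follow. The \<open>+\<close> versions reduce to the
  same statement for the relation \<open>g y < \<Lambda> x\<close>, because the supremum of a down-set of reals
  is the infimum of its complement.\<close>

definition diagonal_Inf :: "(real \<Rightarrow> real \<Rightarrow> bool) \<Rightarrow> ereal" where
  "diagonal_Inf P = Inf {ereal x | x. P x x}"

definition section_Inf :: "(real \<Rightarrow> real \<Rightarrow> bool) \<Rightarrow> real \<Rightarrow> ereal" where
  "section_Inf P x = Inf {ereal y | y. P y x}"

lemma diagonal_Inf_le: "P x x \<Longrightarrow> diagonal_Inf P \<le> ereal x"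
  unfolding diagonal_Inf_def by (rule Inf_lower) blast

lemma section_Inf_le: "P y x \<Longrightarrow> section_Inf P x \<le> ereal y"
  unfolding section_Inf_def by (rule Inf_lower) blast

context
  fixes P :: "real \<Rightarrow> real \<Rightarrow> bool"
  assumes upward_closed: "\<And>y x y' x'. P y x \<Longrightarrow> y \<le> y' \<Longrightarrow> x \<le> x' \<Longrightarrow> P y' x'"
begin

lemma diagonal_Inf_le_section_Inf:
  assumes "ereal x < diagonal_Inf P"
  shows "diagonal_Inf P \<le> section_Inf P x"
  unfolding section_Inf_def
proof (rule Inf_greatest, clarify)
  fix y assume "P y x"
  have "x \<le> y"
  proof (rule ccontr)
    assume "\<not> x \<le> y"
    then have "y \<le> x" by simp
    with \<open>P y x\<close> have "P x x" by (rule upward_closed) simp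
    then have "diagonal_Inf P \<le> ereal x" by (rule diagonal_Inf_le)
    with assms show False by simp
  qed
  with \<open>P y x\<close> have "P y y" by (rule upward_closed[OF _ order_refl])
  then show "diagonal_Inf P \<le> ereal y" by (rule diagonal_Inf_le)
qed

lemma section_Inf_le_diagonal_Inf:
  assumes "diagonal_Inf P < ereal x"
  shows "section_Inf P x \<le> diagonal_Inf P"
proof (rule dense_ge)
  fix z assume "diagonal_Inf P < z"
  with assms obtain r where r: "diagonal_Inf P < ereal r" "ereal r < min z (ereal x)"
    using ereal_dense2[of "diagonal_Inf P" "min z (ereal x)"] by auto
  then obtain t where t: "P t t" "ereal t < ereal r"
    unfolding diagonal_Inf_def Inf_less_iff by blast
  with r have "t \<le> r" "t \<le> x" by auto
  with t(1) have "P r x" by (rule upward_closed)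
  then have "section_Inf P x \<le> ereal r" by (rule section_Inf_le)
  also have "\<dots> \<le> z" using r by (simp add: less_imp_le)
  finally show "section_Inf P x \<le> z" .
qed

lemma diagonal_Inf_eq_INF_max: "diagonal_Inf P = (INF x. max (section_Inf P x) (ereal x))"
proof (rule antisym)
  show "diagonal_Inf P \<le> (INF x. max (section_Inf P x) (ereal x))"
  proof (rule INF_greatest)
    fix x
    show "diagonal_Inf P \<le> max (section_Inf P x) (ereal x)"
    proof (cases "diagonal_Inf P \<le> ereal x")
      case False
      then show ?thesis by (intro max.coboundedI1 diagonal_Inf_le_section_Inf) (simp add: not_le)
    qed (rule max.coboundedI2)
  qed
  show "(INF x. max (section_Inf P x) (ereal x)) \<le> diagonal_Inf P"
    unfolding diagonal_Inf_def
  proof (rule Inf_greatest, clarify)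
    fix x assume "P x x"
    then have "max (section_Inf P x) (ereal x) = ereal x"
      using section_Inf_le by (simp add: max_absorb2)
    then show "(INF x. max (section_Inf P x) (ereal x)) \<le> ereal x"
      by (intro INF_lower2[of x]) simp_all
  qed
qed

lemma diagonal_Inf_eq_SUP_min: "diagonal_Inf P = (SUP x. min (section_Inf P x) (ereal x))"
proof (rule antisym)
  show "diagonal_Inf P \<le> (SUP x. min (section_Inf P x) (ereal x))"
  proof (rule dense_le)
    fix y assume "y < diagonal_Inf P"
    then obtain r where r: "y < ereal r" "ereal r < diagonal_Inf P"
      using ereal_dense2 by blast
    then have "min (section_Inf P r) (ereal r) = ereal r"
      using diagonal_Inf_le_section_Inf[of r] by (simp add: min_absorb2)
    then have "ereal r \<le> (SUP x. min (section_Inf P x) (ereal x))"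
      by (intro SUP_upper2[of r]) simp_all
    with r show "y \<le> (SUP x. min (section_Inf P x) (ereal x))" by simp
  qed
  show "(SUP x. min (section_Inf P x) (ereal x)) \<le> diagonal_Inf P"
  proof (rule SUP_least)
    fix x
    show "min (section_Inf P x) (ereal x) \<le> diagonal_Inf P"
    proof (cases "ereal x \<le> diagonal_Inf P")
      case False
      then show ?thesis by (intro min.coboundedI1 section_Inf_le_diagonal_Inf) (simp add: not_le)
    qed (rule min.coboundedI2)
  qed
qed

end

lemma Sup_downset_eq_Inf_complement:
  fixes D :: "real set"
  assumes down: "\<And>x y. y \<in> D \<Longrightarrow> x \<le> y \<Longrightarrow> x \<in> D"
  shows "Sup (ereal ` D) = Inf (ereal ` (- D))"
proof (rule antisym)
  show "Sup (ereal ` D) \<le> Inf (ereal ` (- D))"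
  proof (rule Sup_least, rule Inf_greatest)
    fix a b assume "a \<in> ereal ` D" "b \<in> ereal ` (- D)"
    then obtain d c where a: "a = ereal d" and b: "b = ereal c" and "d \<in> D" "c \<notin> D"
      by blast
    have "d < c"
    proof (rule ccontr)
      assume "\<not> d < c"
      with \<open>d \<in> D\<close> have "c \<in> D" by (intro down[of d c]) simp_all
      with \<open>c \<notin> D\<close> show False ..
    qed
    then show "a \<le> b" by (simp add: a b)
  qed
  show "Inf (ereal ` (- D)) \<le> Sup (ereal ` D)"
  proof (rule ccontr)
    assume "\<not> ?thesis"
    then have "Sup (ereal ` D) < Inf (ereal ` (- D))" by (simp add: not_le)
    then obtain r where r: "Sup (ereal ` D) < ereal r" "ereal r < Inf (ereal ` (- D))"
      using ereal_dense2 by blast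
    show False
    proof (cases "r \<in> D")
      case True
      then have "ereal r \<le> Sup (ereal ` D)" by (intro Sup_upper) simp
      with r show False by simp
    next
      case False
      then have "Inf (ereal ` (- D)) \<le> ereal r" by (intro Inf_lower) simp
      with r show False by simp
    qed
  qed
qed

lemma capacity_mono:
  "capacity M w \<Longrightarrow> A \<in> sets M \<Longrightarrow> B \<in> sets M \<Longrightarrow> A \<subseteq> B \<Longrightarrow> w A \<le> w B"
  unfolding capacity_def by blast

lemma capacity_exceedance_antimono:
  fixes X :: "'a \<Rightarrow> real"
  assumes "capacity M w" and "X \<in> borel_measurable M"
  shows "antimono (\<lambda>x. w {\<omega> \<in> space M. X \<omega> > x})"
proof (rule antimonoI)
  fix x y :: real assume "x \<le> y"
  have "{\<omega> \<in> space M. X \<omega> > t} \<in> sets M" for t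
    using assms(2) unfolding borel_measurable_iff_greater by blast
  moreover have "{\<omega> \<in> space M. X \<omega> > y} \<subseteq> {\<omega> \<in> space M. X \<omega> > x}"
    using \<open>x \<le> y\<close> by auto
  ultimately show "w {\<omega> \<in> space M. X \<omega> > y} \<le> w {\<omega> \<in> space M. X \<omega> > x}"
    using capacity_mono[OF assms(1)] by blast
qed

lemma LVaR_eq_diagonal_Inf:
  "LVaR M w \<Lambda> X = diagonal_Inf (\<lambda>y x. w {\<omega> \<in> space M. X \<omega> > y} \<le> \<Lambda> x)"
  unfolding LVaR_def diagonal_Inf_def ..

lemma VaR_eq_section_Inf:
  "VaR M w (\<Lambda> x) X = section_Inf (\<lambda>y t. w {\<omega> \<in> space M. X \<omega> > y} \<le> \<Lambda> t) x"
  unfolding VaR_def LVaR_def section_Inf_def ..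

lemma LVaR_plus_eq_diagonal_Inf:
  fixes X :: "'a \<Rightarrow> real"
  assumes "mono \<Lambda>" and "antimono (\<lambda>x. w {\<omega> \<in> space M. X \<omega> > x})"
  shows "LVaR_plus M w \<Lambda> X = diagonal_Inf (\<lambda>y x. w {\<omega> \<in> space M. X \<omega> > y} < \<Lambda> x)"
proof -
  let ?D = "{x. \<Lambda> x \<le> w {\<omega> \<in> space M. X \<omega> > x}}"
  have "LVaR_plus M w \<Lambda> X = Sup (ereal ` ?D)"
    unfolding LVaR_plus_def by (simp add: image_Collect)
  also have "\<dots> = Inf (ereal ` (- ?D))"
  proof (rule Sup_downset_eq_Inf_complement)
    fix x y assume "y \<in> ?D" "x \<le> y"
    then show "x \<in> ?D"
      using monoD[OF assms(1), of x y] antimonoD[OF assms(2), of x y] by auto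
  qed
  also have "- ?D = {x. w {\<omega> \<in> space M. X \<omega> > x} < \<Lambda> x}"
    by (auto simp: not_le)
  also have "Inf (ereal ` \<dots>) = diagonal_Inf (\<lambda>y x. w {\<omega> \<in> space M. X \<omega> > y} < \<Lambda> x)"
    unfolding diagonal_Inf_def image_Collect ..
  finally show ?thesis .
qed

lemma VaR_plus_eq_section_Inf:
  fixes X :: "'a \<Rightarrow> real"
  assumes "antimono (\<lambda>x. w {\<omega> \<in> space M. X \<omega> > x})"
  shows "VaR_plus M w (\<Lambda> x) X = section_Inf (\<lambda>y t. w {\<omega> \<in> space M. X \<omega> > y} < \<Lambda> t) x"
proof -
  have "VaR_plus M w (\<Lambda> x) X = LVaR_plus M w (\<lambda>_. \<Lambda> x) X"
    unfolding VaR_plus_def ..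
  also have "\<dots> = diagonal_Inf (\<lambda>y _. w {\<omega> \<in> space M. X \<omega> > y} < \<Lambda> x)"
    using assms by (rule LVaR_plus_eq_diagonal_Inf[rotated]) (simp add: mono_def)
  finally show ?thesis
    unfolding diagonal_Inf_def section_Inf_def .
qed

theorem mainTheorem3:
  fixes M :: "'a measure" and w :: "'a set \<Rightarrow> real" and \<Lambda> :: "real \<Rightarrow> real"
    and X :: "'a \<Rightarrow> real"
  assumes "\<Lambda> \<in> H_I" and "capacity M w" and "X \<in> borel_measurable M"
  shows "LVaR M w \<Lambda> X = (INF x. max (VaR M w (\<Lambda> x) X) (ereal x))
       \<and> LVaR M w \<Lambda> X = (SUP x. min (VaR M w (\<Lambda> x) X) (ereal x))
       \<and> LVaR_plus M w \<Lambda> X = (INF x. max (VaR_plus M w (\<Lambda> x) X) (ereal x))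
       \<and> LVaR_plus M w \<Lambda> X = (SUP x. min (VaR_plus M w (\<Lambda> x) X) (ereal x))"
proof -
  let ?g = "\<lambda>y. w {\<omega> \<in> space M. X \<omega> > y}"
  let ?below = "\<lambda>y x. ?g y \<le> \<Lambda> x" and ?strictly_below = "\<lambda>y x. ?g y < \<Lambda> x"
  have \<Lambda>_mono: "mono \<Lambda>"
    using assms(1) unfolding H_I_def by blast
  have g_antimono: "antimono ?g"
    using assms(2,3) by (rule capacity_exceedance_antimono)
  have le_upward: "?g y' \<le> \<Lambda> x'" if "?g y \<le> \<Lambda> x" "y \<le> y'" "x \<le> x'" for y x y' x'
    using that antimonoD[OF g_antimono, of y y'] monoD[OF \<Lambda>_mono, of x x'] by linarith
  have less_upward: "?g y' < \<Lambda> x'" if "?g y < \<Lambda> x" "y \<le> y'" "x \<le> x'" for y x y' x'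
    using that antimonoD[OF g_antimono, of y y'] monoD[OF \<Lambda>_mono, of x x'] by linarith
  show ?thesis
    unfolding LVaR_eq_diagonal_Inf VaR_eq_section_Inf
      LVaR_plus_eq_diagonal_Inf[OF \<Lambda>_mono g_antimono] VaR_plus_eq_section_Inf[OF g_antimono]
    using diagonal_Inf_eq_INF_max[where P = ?below, OF le_upward]
      diagonal_Inf_eq_SUP_min[where P = ?below, OF le_upward]
      diagonal_Inf_eq_INF_max[where P = ?strictly_below, OF less_upward]
      diagonal_Inf_eq_SUP_min[where P = ?strictly_below, OF less_upward]
    by (intro conjI)
qed

end
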